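(* Let $F$ be any probability distribution on $[0,\infty)$ with finite mean $\mu=\mathbb{E}[S]>0$. Then for every price $p\in\mathbb{R}_+$, $\mathsf{W}(\mu,F)\ge \mathsf{W}(p,F)$; i.e., posting the mean $p^*=\mu$ is a welfare-maximizing fixed price.
   Context: Symmetric bilateral trade: $B,S$ i.i.d. with distribution $F$ (cumulative distribution function also denoted $F$). Posting price $p$, trade occurs iff $B>p\ge S$. Welfare: $\mathsf{W}(p,F)=\mathbb{E}[S]+\mathbb{E}[(B-S)\mathbf 1_{B>p\ge S}]$. *)

theory Defs
  imports "HOL-Probability.Probability"
begin

text \<open>Welfare of posting price p in symmetric bilateral trade, where the buyer value B
and seller value S are i.i.d. with distribution F. A pair z = (b, s) is drawn from the
product measure F x F; trade happens iff b > p >= s.\<close>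

definition welfare :: "real \<Rightarrow> real measure \<Rightarrow> real" where
  "welfare p F =
     (\<integral>s. s \<partial>F) +
     (\<integral>z. (fst z - snd z) * indicator {z. snd z \<le> p \<and> p < fst z} z \<partial>(F \<Otimes>\<^sub>M F))"

end

theory Submission
  imports Defs
begin

text \<open>Integrating out the buyer's value first, the expected gain from trade at price p equals
  E[(\<mu> - S) 1{S \<le> p}] with \<mu> = E[S]. The integrand (\<mu> - s) 1{s \<le> p} is pointwise at most
  (\<mu> - s) 1{s \<le> \<mu>}, since including exactly the values s below \<mu> collects all positive
  contributions. So p = \<mu> maximises welfare for every distribution with finite mean.\<close>

lemma integrable_pair_measure_fst:
  fixes f :: "'a \<Rightarrow> real"
  assumes "prob_space N" and "integrable M f"
  shows "integrable (M \<Otimes>\<^sub>M N) (\<lambda>z. f (fst z))"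
proof -
  have [measurable]: "f \<in> borel_measurable M"
    using assms(2) by auto
  have "distr (M \<Otimes>\<^sub>M N) M fst = M"
    using assms(1) by (rule prob_space.distr_pair_fst)
  with assms(2) show ?thesis
    using integrable_distr_eq[of fst "M \<Otimes>\<^sub>M N" M f] by simp
qed

lemma integrable_pair_measure_snd:
  fixes f :: "'a \<Rightarrow> real"
  assumes "prob_space M" and "prob_space N" and "integrable N f"
  shows "integrable (M \<Otimes>\<^sub>M N) (\<lambda>z. f (snd z))"
proof -
  interpret pair_sigma_finite N M
    using assms(1,2) by (simp add: pair_sigma_finite_def prob_space_imp_sigma_finite)
  have "integrable (N \<Otimes>\<^sub>M M) (\<lambda>z. f (fst z))"
    using assms(1,3) by (rule integrable_pair_measure_fst)
  then show ?thesis
    using integrable_product_swap[of "\<lambda>z. f (fst z)"] by (simp add: case_prod_unfold)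
qed

lemma integral_mult_indicator_greaterThan:
  fixes f :: "real \<Rightarrow> real"
  assumes "sets M = sets borel" and "integrable M f"
  shows "(\<integral>x. f x * indicator {p<..} x \<partial>M) = (\<integral>x. f x \<partial>M) - (\<integral>x. f x * indicator {..p} x \<partial>M)"
proof -
  have "(\<integral>x. f x \<partial>M) = (\<integral>x. f x * indicator {..p} x + f x * indicator {p<..} x \<partial>M)"
    by (rule Bochner_Integration.integral_cong) (auto simp: indicator_def)
  also have "\<dots> = (\<integral>x. f x * indicator {..p} x \<partial>M) + (\<integral>x. f x * indicator {p<..} x \<partial>M)"
    using assms by (intro Bochner_Integration.integral_add integrable_real_mult_indicator) auto
  finally show ?thesis
    by simp
qed

lemma expected_trade_surplus_eq:
  fixes F :: "real measure"
  assumes "prob_space F" and [measurable_cong]: "sets F = sets borel"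
    and "integrable F (\<lambda>x. x)"
  shows "(\<integral>z. (fst z - snd z) * indicator {z. snd z \<le> p \<and> p < fst z} z \<partial>(F \<Otimes>\<^sub>M F))
        = (\<integral>x. ((\<integral>x. x \<partial>F) - x) * indicator {..p} x \<partial>F)"
proof -
  interpret prob_space F by fact
  interpret pair_sigma_finite F F ..
  define \<mu> where "\<mu> = (\<integral>x. x \<partial>F)"
  define P where "P = (\<integral>x. indicator {..p} x \<partial>F :: real)"
  define A where "A = (\<integral>x. x * indicator {..p} x \<partial>F)"
  have int_id_atMost: "integrable F (\<lambda>x. x * indicator {..p} x)"
    and int_id_greaterThan: "integrable F (\<lambda>x. x * indicator {p<..} x)"
    using assms(3) by (auto intro: integrable_real_mult_indicator)
  have int_ind: "integrable F (\<lambda>x. indicator B x :: real)" if "B \<in> sets borel" for B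
    using that by (intro integrable_real_indicator) (auto simp: emeasure_eq_measure)
  have int_surplus:
    "integrable (F \<Otimes>\<^sub>M F) (\<lambda>z. (fst z - snd z) * indicator {z. snd z \<le> p \<and> p < fst z} z)"
  proof (rule Bochner_Integration.integrable_bound)
    show "integrable (F \<Otimes>\<^sub>M F) (\<lambda>z. \<bar>fst z\<bar> + \<bar>snd z\<bar>)"
      using integrable_pair_measure_fst[OF prob_space_axioms assms(3)]
        integrable_pair_measure_snd[OF prob_space_axioms prob_space_axioms assms(3)]
      by auto
  qed (auto simp: indicator_def)
  have inner: "(\<integral>s. (b - s) * indicator {z. snd z \<le> p \<and> p < fst z} (b, s) \<partial>F)
      = indicator {p<..} b * (b * P - A)" for b
  proof -
    have "(\<lambda>s. (b - s) * indicator {z. snd z \<le> p \<and> p < fst z} (b, s))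
        = (\<lambda>s. indicator {p<..} b * (b * indicator {..p} s - s * indicator {..p} s))"
      by (auto simp: fun_eq_iff indicator_def)
    then show ?thesis
      using int_id_atMost int_ind unfolding P_def A_def by simp
  qed
  have "(\<integral>z. (fst z - snd z) * indicator {z. snd z \<le> p \<and> p < fst z} z \<partial>(F \<Otimes>\<^sub>M F))
      = (\<integral>b. indicator {p<..} b * (b * P - A) \<partial>F)"
    using integral_fst'[OF int_surplus] by (simp add: inner)
  also have "\<dots> = (\<integral>b. b * indicator {p<..} b * P - indicator {p<..} b * A \<partial>F)"
    by (rule Bochner_Integration.integral_cong) (auto simp: algebra_simps)
  also have "\<dots> = (\<mu> - A) * P - (1 - P) * A"
    using integral_mult_indicator_greaterThan[OF assms(2,3), of p]
      integral_mult_indicator_greaterThan[OF assms(2), of "\<lambda>_. 1" p]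
      int_id_greaterThan int_ind
    by (simp add: \<mu>_def A_def P_def prob_space)
  also have "\<dots> = (\<integral>x. \<mu> * indicator {..p} x - x * indicator {..p} x \<partial>F)"
    using int_id_atMost int_ind unfolding P_def A_def by (simp add: algebra_simps)
  finally show ?thesis
    by (simp add: \<mu>_def left_diff_distrib)
qed

lemma welfare_eq_mean_plus_integral:
  fixes F :: "real measure"
  assumes "prob_space F" and "sets F = sets borel" and "integrable F (\<lambda>x. x)"
  shows "welfare p F = (\<integral>x. x \<partial>F) + (\<integral>x. ((\<integral>x. x \<partial>F) - x) * indicator {..p} x \<partial>F)"
  unfolding welfare_def expected_trade_surplus_eq[OF assms] ..

lemma integral_diff_mult_indicator_atMost_le:
  fixes M :: "real measure"
  assumes "sets M = sets borel" and "integrable M (\<lambda>x. x)" and "finite_measure M"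
  shows "(\<integral>x. (c - x) * indicator {..p} x \<partial>M) \<le> (\<integral>x. (c - x) * indicator {..c} x \<partial>M)"
proof -
  have "integrable M (\<lambda>x. (c - x) * indicator B x)" if "B \<in> sets borel" for B
    using assms that
    by (intro integrable_real_mult_indicator Bochner_Integration.integrable_diff
        finite_measure.integrable_const) auto
  from this[of "{..p}"] this[of "{..c}"] show ?thesis
    by (rule integral_mono) (auto simp: indicator_def)
qed

theorem proposition4:
  fixes F :: "real measure" and p :: real
  assumes "prob_space F"
    and "sets F = sets borel"
    and "AE x in F. 0 \<le> x"
    and "integrable F (\<lambda>x. x)"
    and "(\<integral>x. x \<partial>F) > 0"
    and "0 \<le> p"
  shows "welfare (\<integral>x. x \<partial>F) F \<ge> welfare p F"
  using integral_diff_mult_indicator_atMost_le[OF assms(2,4) prob_space.finite_measure[OF assms(1)]]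
  unfolding welfare_eq_mean_plus_integral[OF assms(1,2,4)] by simp

end
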